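(* For every $s\in(0,1]$ there exist $\rho>0$ and a von Mangoldt plane $M_m$ such that $m'(r)=s$ for all $r\in[\rho,\infty)$.
   Context: For a smooth function $m\colon[0,\infty)\to[0,\infty)$ with $m(0)=0$, $m'(0)=1$, $m>0$ on $(0,\infty)$ and whose odd extension to $\mathbb R$ is smooth, $M_m$ is $\mathbb R^2$ with the complete smooth metric $dr^2+m(r)^2d\theta^2$ in polar coordinates, curvature $G_m=-m''/m$; $M_m$ is a von Mangoldt plane if $G_m$ is a non-increasing function of $r$. *)

theory Defs
  imports "HOL-Analysis.Analysis"
begin

definition smooth_real :: "(real \<Rightarrow> real) \<Rightarrow> bool" where
  "smooth_real f \<longleftrightarrow> (\<forall>k::nat. \<forall>x. ((deriv ^^ k) f) differentiable (at x))"

definition odd_ext :: "(real \<Rightarrow> real) \<Rightarrow> real \<Rightarrow> real" where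
  "odd_ext m x = (if x \<ge> 0 then m x else - m (- x))"

text \<open>Admissible warping functions m: smooth on [0,infinity) (with smooth odd
  extension), m(0)=0, m'(0)=1, m>0 on (0,infinity). Only the values of m on
  [0,infinity) matter. Derivatives of m are taken via the odd extension.\<close>
definition admissible_m :: "(real \<Rightarrow> real) \<Rightarrow> bool" where
  "admissible_m m \<longleftrightarrow>
     smooth_real (odd_ext m) \<and> m 0 = 0 \<and> deriv (odd_ext m) 0 = 1 \<and>
     (\<forall>r>0. m r > 0)"

text \<open>Curvature G_m = - m''/m of the metric dr^2 + m(r)^2 dtheta^2 (for r>0).\<close>
definition curv_G :: "(real \<Rightarrow> real) \<Rightarrow> real \<Rightarrow> real" where
  "curv_G m r = - deriv (deriv (odd_ext m)) r / m r"

definition von_mangoldt :: "(real \<Rightarrow> real) \<Rightarrow> bool" where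
  "von_mangoldt m \<longleftrightarrow> admissible_m m \<and>
     (\<forall>r1 r2. 0 < r1 \<longrightarrow> r1 \<le> r2 \<longrightarrow> curv_G m r2 \<le> curv_G m r1)"

end

theory Submission
  imports Defs "HOL-Computational_Algebra.Polynomial"
begin

(* Choose a smooth even profile F with F 0 = 1 and F u = s for |u| >= 1, built from the
   flat function e^(-1/x), such that F and K u = - F' u / u are nonnegative and nonincreasing
   on [0, oo).  The odd solution of the autonomous equation m' = F m, obtained by inverting
   u |-> integral from 0 to u of 1/F, is smooth with m' 0 = 1 and m' = s as soon as m >= 1.
   Its curvature is - m''/m = - F'(m) F(m) / m = K(m) F(m), a product of nonnegative
   nonincreasing functions of r. *)

fun differentiable_times :: "nat \<Rightarrow> (real \<Rightarrow> real) \<Rightarrow> bool" where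
  "differentiable_times 0 f = True"
| "differentiable_times (Suc n) f \<longleftrightarrow>
     (\<forall>x. f differentiable at x) \<and> differentiable_times n (deriv f)"

lemma differentiable_times_iff:
  "differentiable_times n f \<longleftrightarrow> (\<forall>k<n. \<forall>x. (deriv ^^ k) f differentiable at x)"
proof (induction n arbitrary: f)
  case 0
  then show ?case by simp
next
  case (Suc n)
  have deriv_Suc: "(deriv ^^ Suc k) f = (deriv ^^ k) (deriv f)" for k
    by (simp only: funpow_Suc_right o_apply)
  show ?case
    by (simp only: differentiable_times.simps Suc.IH All_less_Suc2 deriv_Suc funpow_0)
qed

lemma smooth_real_iff_differentiable_times:
  "smooth_real f \<longleftrightarrow> (\<forall>n. differentiable_times n f)"
  unfolding smooth_real_def differentiable_times_iff by (meson lessI)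

lemma differentiable_times_Suc_mono:
  "differentiable_times (Suc n) f \<Longrightarrow> differentiable_times n f"
  by (induction n arbitrary: f) auto

lemma differentiable_times_SucI:
  assumes "\<And>x. (f has_real_derivative f' x) (at x)" and "differentiable_times n f'"
  shows "differentiable_times (Suc n) f"
proof -
  have "deriv f = f'"
    using assms(1) DERIV_imp_deriv by blast
  moreover have "f differentiable at x" for x
    using assms(1) real_differentiable_def by blast
  ultimately show ?thesis
    using assms(2) by simp
qed

lemma differentiable_times_SucD:
  "differentiable_times (Suc n) f \<Longrightarrow> (f has_real_derivative deriv f x) (at x)"
  by (simp add: DERIV_deriv_iff_real_differentiable)

lemma differentiable_times_const: "differentiable_times n (\<lambda>x. c)"
  by (induction n arbitrary: c) (auto intro: differentiable_times_SucI[where f'="\<lambda>x. 0"])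

lemma differentiable_times_ident: "differentiable_times n (\<lambda>x. x)"
  by (cases n) (auto intro: differentiable_times_SucI[where f'="\<lambda>x. 1"] differentiable_times_const)

lemma differentiable_times_add:
  "differentiable_times n f \<Longrightarrow> differentiable_times n g \<Longrightarrow>
     differentiable_times n (\<lambda>x. f x + g x)"
proof (induction n arbitrary: f g)
  case (Suc n)
  have "((\<lambda>x. f x + g x) has_real_derivative deriv f x + deriv g x) (at x)" for x
    using Suc.prems by (intro DERIV_add differentiable_times_SucD)
  then show ?case
    using Suc by (intro differentiable_times_SucI) auto
qed simp

lemma differentiable_times_mult:
  "differentiable_times n f \<Longrightarrow> differentiable_times n g \<Longrightarrow>
     differentiable_times n (\<lambda>x. f x * g x)"
proof (induction n arbitrary: f g)
  case (Suc n)
  have "((\<lambda>x. f x * g x) has_real_derivative f x * deriv g x + deriv f x * g x) (at x)" for x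
    using Suc.prems by (intro DERIV_mult' differentiable_times_SucD)
  moreover have "differentiable_times n (\<lambda>x. f x * deriv g x + deriv f x * g x)"
    using Suc differentiable_times_Suc_mono by (intro differentiable_times_add) auto
  ultimately show ?case
    by (rule differentiable_times_SucI)
qed simp

lemma differentiable_times_compose:
  "differentiable_times n f \<Longrightarrow> differentiable_times n g \<Longrightarrow>
     differentiable_times n (\<lambda>x. f (g x))"
proof (induction n arbitrary: f g)
  case (Suc n)
  have "((\<lambda>x. f (g x)) has_real_derivative deriv f (g x) * deriv g x) (at x)" for x
    using Suc.prems by (intro DERIV_chain2 differentiable_times_SucD)
  moreover have "differentiable_times n (\<lambda>x. deriv f (g x) * deriv g x)"
    using Suc differentiable_times_Suc_mono by (intro differentiable_times_mult) auto
  ultimately show ?case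
    by (rule differentiable_times_SucI)
qed simp

definition flat_exp :: "real poly \<Rightarrow> real \<Rightarrow> real" where
  "flat_exp p x = (if x > 0 then poly p (1 / x) * exp (- 1 / x) else 0)"

(* (p(1/x) e^(-1/x))' = q(1/x) e^(-1/x) with q y = y^2 (p y - p' y) *)
definition flat_exp_pderiv :: "real poly \<Rightarrow> real poly" where
  "flat_exp_pderiv p = [:0, 0, 1:] * (p - pderiv p)"

lemma poly_over_exp_tendsto_0: "((\<lambda>y::real. poly p y / exp y) \<longlongrightarrow> 0) at_top"
proof -
  have "((\<lambda>y. \<Sum>i\<le>degree p. coeff p i * (y ^ i / exp y)) \<longlongrightarrow> 0) at_top"
    by (intro tendsto_null_sum tendsto_mult_right_zero tendsto_power_div_exp_0)
  then show ?thesis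
    by (simp add: poly_altdef sum_divide_distrib)
qed

lemma flat_exp_over_ident_tendsto_0: "((\<lambda>x. flat_exp p x / x) \<longlongrightarrow> 0) (at 0)"
  unfolding filterlim_at_split
proof
  show "((\<lambda>x. flat_exp p x / x) \<longlongrightarrow> 0) (at_left 0)"
    by (rule tendsto_eventually)
       (use eventually_at_left_real[of "-1" 0] in \<open>auto elim!: eventually_mono simp: flat_exp_def\<close>)
next
  have "\<forall>\<^sub>F y in at_top. poly ([:0, 1:] * p) y / exp y = flat_exp p (inverse y) / inverse y"
    using eventually_gt_at_top[of 0] by eventually_elim (simp add: flat_exp_def exp_minus field_simps)
  then show "((\<lambda>x. flat_exp p x / x) \<longlongrightarrow> 0) (at_right 0)"
    unfolding filterlim_at_right_to_top by (rule Lim_transform_eventually[OF poly_over_exp_tendsto_0])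
qed

lemma has_real_derivative_flat_exp:
  "(flat_exp p has_real_derivative flat_exp (flat_exp_pderiv p) x) (at x)"
proof (cases x "0 :: real" rule: linorder_cases)
  case less
  have "\<forall>\<^sub>F y in nhds x. flat_exp p y = 0"
    using eventually_nhds_in_open[of "{..<0}" x] less by (auto elim!: eventually_mono simp: flat_exp_def)
  then have "(flat_exp p has_real_derivative 0) (at x)"
    by (subst DERIV_cong_ev[OF refl _ refl]) auto
  then show ?thesis
    using less by (simp add: flat_exp_def)
next
  case equal
  then show ?thesis
    using flat_exp_over_ident_tendsto_0[of p] by (simp add: has_field_derivative_iff flat_exp_def)
next
  case greater
  have "((\<lambda>x. poly p (1 / x) * exp (- 1 / x)) has_real_derivative
      poly (pderiv p) (1 / x) * (- 1 / x\<^sup>2) * exp (- 1 / x) +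
      poly p (1 / x) * (exp (- 1 / x) * (1 / x\<^sup>2))) (at x)"
    using greater
    by (auto intro!: derivative_eq_intros DERIV_chain2[OF poly_DERIV] simp: power2_eq_square field_simps)
  moreover have "\<forall>\<^sub>F y in nhds x. flat_exp p y = poly p (1 / y) * exp (- 1 / y)"
    using eventually_nhds_in_open[of "{0<..}" x] greater by (auto elim!: eventually_mono simp: flat_exp_def)
  ultimately show ?thesis
    using greater
    by (subst DERIV_cong_ev[OF refl])
       (auto simp: flat_exp_def flat_exp_pderiv_def field_simps power2_eq_square)
qed

lemma differentiable_times_flat_exp: "differentiable_times n (flat_exp p)"
proof (induction n arbitrary: p)
  case (Suc n)
  show ?case
    by (rule differentiable_times_SucI[OF has_real_derivative_flat_exp Suc.IH])
qed simp

abbreviation psi :: "real \<Rightarrow> real" where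
  "psi \<equiv> flat_exp 1"

abbreviation dpsi :: "real \<Rightarrow> real" where
  "dpsi \<equiv> flat_exp (flat_exp_pderiv 1)"

lemma psi_pos: "0 < x \<Longrightarrow> 0 < psi x"
  by (simp add: flat_exp_def)

lemma psi_nonneg: "0 \<le> psi x"
  by (simp add: flat_exp_def)

lemma psi_eq_0: "x \<le> 0 \<Longrightarrow> psi x = 0"
  by (simp add: flat_exp_def)

lemma poly_flat_exp_pderiv_1: "poly (flat_exp_pderiv 1) y = y\<^sup>2"
  by (simp add: flat_exp_pderiv_def power2_eq_square)

lemma poly_flat_exp_pderiv_pderiv_1: "poly (flat_exp_pderiv (flat_exp_pderiv 1)) y = y ^ 3 * (y - 2)"
  by (simp add: flat_exp_pderiv_def pderiv_pCons pderiv_mult algebra_simps power3_eq_cube power2_eq_square)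

lemma dpsi_nonneg: "0 \<le> dpsi x"
  by (simp add: flat_exp_def poly_flat_exp_pderiv_1)

lemma psi_mono: "x \<le> y \<Longrightarrow> psi x \<le> psi y"
  by (rule DERIV_nonneg_imp_nondecreasing) (use has_real_derivative_flat_exp dpsi_nonneg in blast)+

(* psi'' x = (1 - 2 x) e^(-1/x) / x^4 for x > 0, which is nonnegative up to x = 1/2. *)
lemma dpsi_mono:
  assumes "x \<le> y" and "y \<le> 1/2"
  shows "dpsi x \<le> dpsi y"
proof (rule DERIV_nonneg_imp_nondecreasing[OF assms(1)])
  fix z
  assume "z \<le> y"
  with assms(2) have "0 \<le> flat_exp (flat_exp_pderiv (flat_exp_pderiv 1)) z"
    by (cases "z > 0") (auto simp: flat_exp_def poly_flat_exp_pderiv_pderiv_1 field_simps)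
  then show "\<exists>d. (dpsi has_real_derivative d) (at z) \<and> 0 \<le> d"
    using has_real_derivative_flat_exp by blast
qed

definition bump_profile :: "real \<Rightarrow> real \<Rightarrow> real" where
  "bump_profile s u = s + (1 - s) / psi (1/2) * psi ((1 - u\<^sup>2) / 2)"

definition bump_rate :: "real \<Rightarrow> real \<Rightarrow> real" where
  "bump_rate s u = (1 - s) / psi (1/2) * dpsi ((1 - u\<^sup>2) / 2)"

lemma has_real_derivative_bump_profile:
  "(bump_profile s has_real_derivative - (u * bump_rate s u)) (at u)"
proof -
  have "((\<lambda>u. psi ((1 - u\<^sup>2) / 2)) has_real_derivative dpsi ((1 - u\<^sup>2) / 2) * (- u)) (at u)"
    by (rule DERIV_chain2[OF has_real_derivative_flat_exp]) (auto intro!: derivative_eq_intros)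
  then show ?thesis
    unfolding bump_profile_def[abs_def] bump_rate_def
    using psi_pos[of "1/2"] by (auto intro!: derivative_eq_intros)
qed

lemma differentiable_times_bump_profile: "differentiable_times n (bump_profile s)"
proof -
  have "(\<lambda>u::real. (1 - u\<^sup>2) / 2) = (\<lambda>u. 1/2 + (- 1/2) * (u * u))"
    by (auto simp: power2_eq_square)
  then have "differentiable_times n (\<lambda>u. (1 - u\<^sup>2) / 2)"
    by (simp only:)
       (intro differentiable_times_add differentiable_times_mult differentiable_times_const
         differentiable_times_ident)
  then show ?thesis
    unfolding bump_profile_def[abs_def]
    by (intro differentiable_times_add differentiable_times_mult differentiable_times_const
        differentiable_times_compose[OF differentiable_times_flat_exp])
qed

lemma bump_profile_minus: "bump_profile s (- u) = bump_profile s u"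
  by (simp add: bump_profile_def)

lemma bump_profile_0: "bump_profile s 0 = 1"
  using psi_pos[of "1/2"] by (simp add: bump_profile_def)

lemma bump_profile_eq:
  assumes "1 \<le> \<bar>u\<bar>"
  shows "bump_profile s u = s"
proof -
  have "1 \<le> \<bar>u\<bar>\<^sup>2"
    by (rule one_le_power[OF assms])
  then show ?thesis
    by (simp add: bump_profile_def psi_eq_0)
qed

lemma bump_profile_bounds:
  assumes "s \<le> 1"
  shows "s \<le> bump_profile s u" and "bump_profile s u \<le> 1"
proof -
  have c: "0 \<le> (1 - s) / psi (1/2)"
    using assms psi_pos[of "1/2"] by simp
  have "(1 - s) / psi (1/2) * psi ((1 - u\<^sup>2) / 2) \<le> (1 - s) / psi (1/2) * psi (1/2)"
    by (intro mult_left_mono[OF psi_mono c]) simp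
  then show "bump_profile s u \<le> 1"
    using psi_pos[of "1/2"] by (simp add: bump_profile_def)
  show "s \<le> bump_profile s u"
    using mult_nonneg_nonneg[OF c psi_nonneg] by (simp add: bump_profile_def)
qed

lemma bump_profile_pos: "0 < s \<Longrightarrow> s \<le> 1 \<Longrightarrow> 0 < bump_profile s u"
  using bump_profile_bounds(1)[of s u] by linarith

lemma continuous_on_bump_profile: "continuous_on UNIV (bump_profile s)"
  using has_real_derivative_bump_profile
  by (intro continuous_at_imp_continuous_on ballI) (rule DERIV_isCont)

lemma bump_profile_antimono:
  assumes "s \<le> 1" and "0 \<le> u" and "u \<le> v"
  shows "bump_profile s v \<le> bump_profile s u"
proof -
  have "psi ((1 - v\<^sup>2) / 2) \<le> psi ((1 - u\<^sup>2) / 2)"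
    using assms by (intro psi_mono) (simp add: power_mono)
  then show ?thesis
    unfolding bump_profile_def
    by (intro add_left_mono mult_left_mono) (use assms psi_pos[of "1/2"] in simp_all)
qed

lemma bump_rate_nonneg: "s \<le> 1 \<Longrightarrow> 0 \<le> bump_rate s u"
  using psi_pos[of "1/2"] dpsi_nonneg by (simp add: bump_rate_def)

lemma bump_rate_antimono:
  assumes "s \<le> 1" and "0 \<le> u" and "u \<le> v"
  shows "bump_rate s v \<le> bump_rate s u"
proof -
  have "dpsi ((1 - v\<^sup>2) / 2) \<le> dpsi ((1 - u\<^sup>2) / 2)"
    using assms by (intro dpsi_mono) (simp_all add: power_mono)
  then show ?thesis
    unfolding bump_rate_def by (rule mult_left_mono) (use assms psi_pos[of "1/2"] in simp)
qed

lemma continuous_on_UNIV_antiderivative: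
  fixes f :: "real \<Rightarrow> real"
  assumes "continuous_on UNIV f"
  obtains R where "\<And>x. (R has_real_derivative f x) (at x)" and "R 0 = 0"
proof -
  obtain F where F: "\<And>x. (F has_vector_derivative f x) (at x)"
    using einterval_antiderivative[of "-\<infinity>" "\<infinity>" f] assms
    by (auto simp: continuous_on_eq_continuous_at)
  show ?thesis
    by (rule that[of "\<lambda>x. F x - F 0"])
       (use F in \<open>auto intro!: derivative_eq_intros
          simp: has_real_derivative_iff_has_vector_derivative[symmetric]\<close>)
qed

lemma strict_mono_surj_if_derivative_ge:
  fixes R :: "real \<Rightarrow> real"
  assumes R': "\<And>x. (R has_real_derivative R' x) (at x)"
    and ge: "\<And>x. c \<le> R' x" and "0 < c"
  shows "strict_mono R" and "surj R"
proof -
  have growth: "c * (b - a) \<le> R b - R a" if "a \<le> b" for a b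
  proof -
    have "R a - c * a \<le> R b - c * b"
    proof (rule DERIV_nonneg_imp_nondecreasing[OF that])
      fix x
      have "((\<lambda>x. R x - c * x) has_real_derivative R' x - c) (at x)"
        by (auto intro!: derivative_eq_intros R')
      then show "\<exists>d. ((\<lambda>x. R x - c * x) has_real_derivative d) (at x) \<and> 0 \<le> d"
        using ge[of x] by force
    qed
    then show ?thesis
      by (simp add: right_diff_distrib)
  qed
  show "strict_mono R"
    by (rule strict_monoI) (use growth \<open>0 < c\<close> in \<open>smt (verit) mult_pos_pos\<close>)
  have "\<exists>x. R x = y" for y
  proof -
    define d where "d = (\<bar>y\<bar> + \<bar>R 0\<bar>) / c"
    have "0 \<le> d"
      using \<open>0 < c\<close> by (simp add: d_def)
    then have "R (- d) \<le> y" and "y \<le> R d"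
      using growth[of "- d" 0] growth[of 0 d] \<open>0 < c\<close>
      by (simp_all add: d_def) (smt (verit) abs_ge_self abs_ge_minus_self)+
    moreover have "continuous_on {- d..d} R"
      using R' by (intro continuous_at_imp_continuous_on ballI) (rule DERIV_isCont)
    ultimately show ?thesis
      using IVT'[of R "- d" y d] \<open>0 \<le> d\<close> by auto
  qed
  then show "surj R"
    by (metis surjI)
qed

lemma has_real_derivative_inv:
  fixes R :: "real \<Rightarrow> real"
  assumes R': "\<And>x. (R has_real_derivative R' x) (at x)"
    and "strict_mono R" and "surj R" and "R' (inv R y) \<noteq> 0"
  shows "(inv R has_real_derivative inverse (R' (inv R y))) (at y)"
proof -
  have inv_R: "inv R (R x) = x" for x
    using \<open>strict_mono R\<close> by (simp add: strict_mono_imp_inj_on)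
  have R_inv: "R (inv R y) = y" for y
    using \<open>surj R\<close> by (simp add: surj_f_inv_f)
  have "isCont (inv R) (R (inv R y))"
    by (rule isCont_inverse_function[where f=R and g="inv R" and d=1])
       (simp_all add: inv_R DERIV_isCont[OF R'])
  then show ?thesis
    by (intro DERIV_inverse_function[where f=R and a="y - 1" and b="y + 1"])
       (use assms R_inv in auto)
qed

lemma autonomous_ode_odd_solution:
  fixes F :: "real \<Rightarrow> real"
  assumes cont: "continuous_on UNIV F"
    and pos: "\<And>u. 0 < F u" and bounded: "\<And>u. F u \<le> B"
    and even: "\<And>u. F (- u) = F u"
  obtains m where "\<And>y. (m has_real_derivative F (m y)) (at y)" and "strict_mono m"
    and "surj m" and "\<And>y. m (- y) = - m y"
proof -
  have "continuous_on UNIV (\<lambda>u. 1 / F u)"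
    using cont pos by (intro continuous_intros) (auto simp: less_le)
  from continuous_on_UNIV_antiderivative[OF this]
  obtain R where R': "\<And>u. (R has_real_derivative 1 / F u) (at u)" and "R 0 = 0"
    by blast
  have "0 < B"
    using pos[of 0] bounded[of 0] by simp
  have "1 / B \<le> 1 / F u" for u
    using pos[of u] bounded[of u] by (simp add: frac_le)
  from strict_mono_surj_if_derivative_ge[OF R' this] \<open>0 < B\<close>
  have "strict_mono R" and "surj R"
    by simp_all
  have R_odd: "R (- u) = - R u" for u
  proof -
    have "((\<lambda>u. R u + R (- u)) has_real_derivative 0) (at x)" for x
      using DERIV_add[OF R' DERIV_chain2[OF R' DERIV_minus[OF DERIV_ident]]] even by simp
    then have "R u + R (- u) = R 0 + R (- 0)"
      by (intro DERIV_isconst_all) blast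
    then show ?thesis
      using \<open>R 0 = 0\<close> by simp
  qed
  have inv_R: "inv R (R u) = u" for u
    using \<open>strict_mono R\<close> by (simp add: strict_mono_imp_inj_on)
  have R_inv: "R (inv R y) = y" for y
    using \<open>surj R\<close> by (simp add: surj_f_inv_f)
  show ?thesis
  proof
    show "(inv R has_real_derivative F (inv R y)) (at y)" for y
      using has_real_derivative_inv[OF R' \<open>strict_mono R\<close> \<open>surj R\<close>, of y] pos[of "inv R y"]
      by simp
    show "strict_mono (inv R)"
      by (rule strict_mono_inv[OF \<open>strict_mono R\<close> \<open>surj R\<close> inv_R])
    show "surj (inv R)"
      by (metis inv_R surjI)
    show "inv R (- y) = - inv R y" for y
      by (metis R_odd R_inv inv_R)
  qed
qed

lemma differentiable_times_ode_solution:
  assumes ode: "\<And>y. (m has_real_derivative F (m y)) (at y)"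
    and F: "\<And>n. differentiable_times n F"
  shows "differentiable_times n m"
proof (induction n)
  case (Suc n)
  show ?case
    by (rule differentiable_times_SucI[OF ode differentiable_times_compose[OF F Suc.IH]])
qed simp

lemma odd_ext_eq_self: "(\<And>x. m (- x) = - m x) \<Longrightarrow> odd_ext m = m"
  by (auto simp: odd_ext_def fun_eq_iff)

lemma von_mangoldt_ode_solution:
  assumes ode: "\<And>y. (m has_real_derivative F (m y)) (at y)"
    and "strict_mono m" and odd: "\<And>y. m (- y) = - m y"
    and F_smooth: "\<And>n. differentiable_times n F"
    and F': "\<And>u. (F has_real_derivative - (u * K u)) (at u)"
    and "F 0 = 1" and F_pos: "\<And>u. 0 < F u"
    and F_antimono: "\<And>u v. 0 \<le> u \<Longrightarrow> u \<le> v \<Longrightarrow> F v \<le> F u"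
    and K_nonneg: "\<And>u. 0 \<le> K u"
    and K_antimono: "\<And>u v. 0 \<le> u \<Longrightarrow> u \<le> v \<Longrightarrow> K v \<le> K u"
  shows "von_mangoldt m"
proof -
  have m_ext: "odd_ext m = m"
    using odd by (rule odd_ext_eq_self)
  have m0: "m 0 = 0"
    using odd[of 0] by simp
  have m_pos: "0 < m r" if "0 < r" for r
    using strict_mono_less[OF \<open>strict_mono m\<close>, of 0 r] that m0 by simp
  have m_mono: "m r1 \<le> m r2" if "r1 \<le> r2" for r1 r2
    using strict_mono_less_eq[OF \<open>strict_mono m\<close>] that by simp
  have deriv_m: "deriv m = (\<lambda>y. F (m y))"
    using ode DERIV_imp_deriv by blast
  have "deriv (deriv m) r = - m r * K (m r) * F (m r)" for r
    unfolding deriv_m by (rule DERIV_imp_deriv) (use DERIV_chain2[OF F' ode] in simp)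
  then have curv: "curv_G m r = K (m r) * F (m r)" if "0 < r" for r
    using m_pos[OF that] by (simp add: curv_G_def m_ext)
  show ?thesis
    unfolding von_mangoldt_def admissible_m_def m_ext
  proof (intro conjI allI impI)
    show "smooth_real m"
      using differentiable_times_ode_solution[OF ode F_smooth]
      by (simp add: smooth_real_iff_differentiable_times)
    show "deriv m 0 = 1"
      by (simp add: deriv_m m0 \<open>F 0 = 1\<close>)
    fix r1 r2 :: real
    assume "0 < r1" and "r1 \<le> r2"
    then have "0 \<le> m r1" and "m r1 \<le> m r2"
      using m_pos m_mono by (auto simp: less_imp_le)
    then have "K (m r2) * F (m r2) \<le> K (m r1) * F (m r1)"
      by (intro mult_mono K_antimono F_antimono K_nonneg) (auto intro: less_imp_le F_pos)
    then show "curv_G m r2 \<le> curv_G m r1"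
      using curv \<open>0 < r1\<close> \<open>r1 \<le> r2\<close> by simp
  qed (use m0 m_pos in auto)
qed

theorem theorem1p11:
  fixes s :: real
  assumes "0 < s" and "s \<le> 1"
  shows "\<exists>\<rho>>0. \<exists>m. von_mangoldt m \<and> (\<forall>r\<ge>\<rho>. deriv (odd_ext m) r = s)"
proof -
  obtain m where ode: "\<And>y. (m has_real_derivative bump_profile s (m y)) (at y)"
    and "strict_mono m" and "surj m" and odd: "\<And>y. m (- y) = - m y"
    using autonomous_ode_odd_solution[OF continuous_on_bump_profile] bump_profile_pos
      bump_profile_bounds(2) bump_profile_minus assms
    by metis
  have m_ext: "odd_ext m = m"
    using odd by (rule odd_ext_eq_self)
  have "von_mangoldt m"
    using assms
    by (intro von_mangoldt_ode_solution[where m = m and F = "bump_profile s" and K = "bump_rate s"])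
       (simp_all add: ode \<open>strict_mono m\<close> odd differentiable_times_bump_profile
         has_real_derivative_bump_profile bump_profile_0 bump_profile_pos bump_profile_antimono
         bump_rate_nonneg bump_rate_antimono)
  obtain \<rho> where "m \<rho> = 1"
    using \<open>surj m\<close> by (metis surjD)
  moreover have "m 0 = 0"
    using odd[of 0] by simp
  ultimately have "0 < \<rho>"
    using strict_mono_less[OF \<open>strict_mono m\<close>, of 0 \<rho>] by simp
  moreover have "deriv (odd_ext m) r = s" if "\<rho> \<le> r" for r
  proof -
    have "1 \<le> m r"
      using strict_mono_less_eq[OF \<open>strict_mono m\<close>] \<open>m \<rho> = 1\<close> that by metis
    then show ?thesis
      using DERIV_imp_deriv[OF ode] by (simp add: m_ext bump_profile_eq)
  qed
  ultimately show ?thesis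
    using \<open>von_mangoldt m\<close> by blast
qed

end
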